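(* Let $n\ge 7$ and let $G$ be a connected simple graph with $n$ vertices and $n+1$ edges that contains two vertex-disjoint triangles $v_1v_2v_3$ and $w_1w_2w_3$ joined by a path $v_3uw_1$ of length $2$ (so that these two triangles are the cycles of $G$ and this path connects them). Then $\operatorname{avm}(G)>\operatorname{avm}(T_n^1(3,3))$.
   Context: $\operatorname{avm}(G)$ is the average of $|M|$ over all maximal matchings $M$ of $G$ (a matching is maximal if not properly contained in another matching). $T_n^1(3,3)$ is the graph obtained from two vertex-disjoint triangles $a_1a_2a_3$ and $b_1b_2b_3$ joined by the edge $a_3b_1$ by attaching $n-6$ pendant edges (new leaves) to $a_3$. *)

theory Defs
  imports Complex_Main
begin

definition simple_graph :: "'a set \<Rightarrow> 'a set set \<Rightarrow> bool" where
  "simple_graph V E \<longleftrightarrow> finite V \<and>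
     (\<forall>e\<in>E. \<exists>x y. x \<noteq> y \<and> x \<in> V \<and> y \<in> V \<and> e = {x, y})"

definition adj_rel :: "'a set set \<Rightarrow> ('a \<times> 'a) set" where
  "adj_rel E = {(x, y). {x, y} \<in> E}"

definition connected_graph :: "'a set \<Rightarrow> 'a set set \<Rightarrow> bool" where
  "connected_graph V E \<longleftrightarrow> (\<forall>x\<in>V. \<forall>y\<in>V. (x, y) \<in> (adj_rel E)\<^sup>*)"

definition matching :: "'a set set \<Rightarrow> 'a set set \<Rightarrow> bool" where
  "matching E M \<longleftrightarrow> M \<subseteq> E \<and> (\<forall>e1\<in>M. \<forall>e2\<in>M. e1 \<noteq> e2 \<longrightarrow> e1 \<inter> e2 = {})"

definition maximal_matching :: "'a set set \<Rightarrow> 'a set set \<Rightarrow> bool" where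
  "maximal_matching E M \<longleftrightarrow> matching E M \<and>
     (\<forall>M'. matching E M' \<and> M \<subseteq> M' \<longrightarrow> M' = M)"

definition maximal_matchings :: "'a set set \<Rightarrow> 'a set set set" where
  "maximal_matchings E = {M. maximal_matching E M}"

definition avm :: "'a set set \<Rightarrow> real" where
  "avm E = (\<Sum>M\<in>maximal_matchings E. real (card M)) / real (card (maximal_matchings E))"

text \<open>The graph T_n^1(3,3) on vertices 0..n-1: triangles a1 a2 a3 = 0 1 2 and
  b1 b2 b3 = 3 4 5, the bridge a3 b1 = {2,3}, and pendant edges {2,k} for 6 <= k < n.\<close>
definition T1_33_vertices :: "nat \<Rightarrow> nat set" where
  "T1_33_vertices n = {0..<n}"

definition T1_33_edges :: "nat \<Rightarrow> nat set set" where
  "T1_33_edges n = {{0,1}, {1,2}, {0,2}, {3,4}, {4,5}, {3,5}, {2,3}} \<union> {{2, k} | k. 6 \<le> k \<and> k < n}"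

end

theory Submission
  imports Defs
begin

(* The maximal matchings of T_n^1(3,3) are six matchings with two edges and 3n - 17 with
   three edges, so its average is c(n) = (9n - 39)/(3n - 11), strictly between 2 and 3.
   In G every maximal matching covers two vertices of each triangle and thus has at least two
   edges; if none has exactly two, the average is at least 3. Otherwise a maximal matching with
   two edges covers v3 and w1 (to cover the path v3 u w1) and one further vertex of each triangle,
   and every edge of G meets these four vertices. As G is connected with n + 1 edges, it then
   consists of the triangles, the path and one pendant edge from each remaining vertex to one of
   the four. Such a graph has at most four maximal matchings with two edges, at least two (three
   if n = 7) with three edges and one with four edges through each pendant vertex, which makes the
   sum of |M| - c(n) over all maximal matchings positive. *)

section \<open>Maximal matchings\<close>

lemma matching_iff_pairwise_disjnt: "matching E M \<longleftrightarrow> M \<subseteq> E \<and> pairwise disjnt M"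
  unfolding matching_def pairwise_def disjnt_def by blast

lemma maximal_matching_iff_covers:
  assumes "\<forall>e\<in>E. e \<noteq> {}"
  shows "maximal_matching E M \<longleftrightarrow> matching E M \<and> (\<forall>e\<in>E. e \<inter> \<Union>M \<noteq> {})"
proof
  assume max: "maximal_matching E M"
  have "e \<inter> \<Union>M \<noteq> {}" if "e \<in> E" for e
  proof
    assume "e \<inter> \<Union>M = {}"
    with max that have "matching E (insert e M)"
      unfolding maximal_matching_def matching_def by blast
    with max have "e \<subseteq> \<Union>M" unfolding maximal_matching_def by blast
    with \<open>e \<inter> \<Union>M = {}\<close> assms that show False by (simp add: Int_absorb2)
  qed
  with max show "matching E M \<and> (\<forall>e\<in>E. e \<inter> \<Union>M \<noteq> {})"
    unfolding maximal_matching_def by blast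
next
  assume match: "matching E M \<and> (\<forall>e\<in>E. e \<inter> \<Union>M \<noteq> {})"
  have "M' \<subseteq> M" if M': "matching E M'" "M \<subseteq> M'" for M'
  proof
    fix e assume "e \<in> M'"
    with M' have "e \<in> E" unfolding matching_def by blast
    with match obtain h where "h \<in> M" "e \<inter> h \<noteq> {}" by blast
    moreover from M' have "\<forall>e1\<in>M'. \<forall>e2\<in>M'. e1 \<noteq> e2 \<longrightarrow> e1 \<inter> e2 = {}"
      unfolding matching_def by blast
    ultimately have "e = h" using \<open>e \<in> M'\<close> M'(2) by (metis subsetD)
    with \<open>h \<in> M\<close> show "e \<in> M" by simp
  qed
  with match show "maximal_matching E M" unfolding maximal_matching_def by (metis subset_antisym)
qed

lemma card_Union_matching:
  assumes "matching E M" "\<forall>e\<in>E. card e = 2" "finite M"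
  shows "card (\<Union>M) = 2 * card M"
proof -
  have card_M: "\<forall>e\<in>M. card e = 2" using assms(1,2) unfolding matching_def by blast
  then have "card (\<Union>M) = sum card M"
    using assms(1,3) unfolding matching_def
    by (intro card_Union_disjoint) (auto simp: pairwise_def disjnt_def card_ge_0_finite)
  also have "\<dots> = 2 * card M" using card_M by simp
  finally show ?thesis .
qed

lemma finite_maximal_matchings: "finite E \<Longrightarrow> finite (maximal_matchings E)"
  unfolding maximal_matchings_def maximal_matching_def matching_def
  by (rule finite_subset[of _ "Pow E"]) auto

lemma maximal_matchings_nonempty:
  assumes "finite E"
  shows "maximal_matchings E \<noteq> {}"
proof -
  have "{M. matching E M} \<subseteq> Pow E" by (auto simp: matching_def)
  then have "finite {M. matching E M}" using assms by (simp add: finite_subset)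
  moreover have "{} \<in> {M. matching E M}" by (simp add: matching_def)
  ultimately obtain M where "matching E M" "\<forall>M'. matching E M' \<and> M \<subseteq> M' \<longrightarrow> M' = M"
    using finite_has_maximal[of "{M. matching E M}"] by blast
  then show ?thesis unfolding maximal_matchings_def maximal_matching_def by blast
qed

lemma avm_gt_if_excess_pos:
  assumes "finite (maximal_matchings E)"
    and "0 < (\<Sum>M\<in>maximal_matchings E. real (card M) - c)"
  shows "c < avm E"
proof -
  let ?MM = "maximal_matchings E"
  have "?MM \<noteq> {}" using assms(2) by auto
  then have "real (card ?MM) > 0" using assms(1) by (simp add: card_gt_0_iff)
  moreover have "(\<Sum>M\<in>?MM. real (card M)) - real (card ?MM) * c > 0"
    using assms(2) by (simp add: sum_subtractf)
  ultimately show ?thesis unfolding avm_def by (simp add: pos_less_divide_eq mult.commute)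
qed

lemma sum_excess_lower_bound:
  fixes MM :: "'b set set" and c :: real
  assumes "finite MM" "2 < c" "c < 3" "\<forall>M\<in>MM. 2 \<le> card M"
    and "card {M\<in>MM. card M = 2} \<le> k" "B \<subseteq> MM" "\<forall>M\<in>B. card M \<noteq> 2"
  shows "real k * (2 - c) + (\<Sum>M\<in>B. real (card M) - c) \<le> (\<Sum>M\<in>MM. real (card M) - c)"
proof -
  let ?S = "{M\<in>MM. card M = 2}"
  have "real k * (2 - c) \<le> real (card ?S) * (2 - c)"
    using assms(2,5) by (intro mult_right_mono_neg) auto
  also have "\<dots> = (\<Sum>M\<in>?S. real (card M) - c)" by simp
  finally have small: "real k * (2 - c) \<le> (\<Sum>M\<in>?S. real (card M) - c)" .
  have large: "(\<Sum>M\<in>B. real (card M) - c) \<le> (\<Sum>M\<in>MM - ?S. real (card M) - c)"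
  proof (rule sum_mono2)
    show "finite (MM - ?S)" using assms(1) by simp
    show "B \<subseteq> MM - ?S" using assms(6,7) by blast
    show "0 \<le> real (card M) - c" if "M \<in> MM - ?S - B" for M
    proof -
      from that assms(4) have "3 \<le> card M" by fastforce
      with assms(3) show ?thesis by linarith
    qed
  qed
  have "?S \<subseteq> MM" by blast
  then have "(\<Sum>M\<in>MM. real (card M) - c)
      = (\<Sum>M\<in>MM - ?S. real (card M) - c) + (\<Sum>M\<in>?S. real (card M) - c)"
    using assms(1) by (rule sum.subset_diff)
  with small large show ?thesis by linarith
qed

lemma simple_graph_card_edge: "simple_graph V E \<Longrightarrow> e \<in> E \<Longrightarrow> card e = 2"
  unfolding simple_graph_def by fastforce

lemma triangle_vertex_cover:
  assumes "\<forall>e\<in>E. e \<inter> U \<noteq> {}" "{a1, a2} \<in> E" "{a2, a3} \<in> E" "{a1, a3} \<in> E"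
    and "distinct [a1, a2, a3]"
  shows "2 \<le> card ({a1, a2, a3} \<inter> U)"
proof -
  have "{a1, a2} \<inter> U \<noteq> {}" "{a2, a3} \<inter> U \<noteq> {}" "{a1, a3} \<inter> U \<noteq> {}"
    using assms(1-4) by blast+
  then have "\<exists>x y. x \<noteq> y \<and> {x, y} \<subseteq> {a1, a2, a3} \<inter> U"
    using assms(5) by (cases "a1 \<in> U"; cases "a2 \<in> U") auto
  then obtain x y where "x \<noteq> y" "{x, y} \<subseteq> {a1, a2, a3} \<inter> U" by blast
  then show ?thesis using card_mono[of "{a1, a2, a3} \<inter> U" "{x, y}"] by simp
qed

lemma maximal_matching_two_triangles:
  assumes max: "maximal_matching E M" and card_E: "\<forall>e\<in>E. card e = 2" and "finite E"
    and "{a1, a2} \<in> E" "{a2, a3} \<in> E" "{a1, a3} \<in> E"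
    and "{b1, b2} \<in> E" "{b2, b3} \<in> E" "{b1, b3} \<in> E"
    and dist: "distinct [a1, a2, a3, b1, b2, b3]"
  shows "2 \<le> card M" and "card M = 2 \<Longrightarrow> \<Union>M \<subseteq> {a1, a2, a3, b1, b2, b3}"
proof -
  have "\<forall>e\<in>E. e \<noteq> {}" using card_E by (metis card.empty zero_neq_numeral)
  with max have match: "matching E M" and cover: "\<forall>e\<in>E. e \<inter> \<Union>M \<noteq> {}"
    by (simp_all add: maximal_matching_iff_covers)
  have "finite M" using match \<open>finite E\<close> finite_subset unfolding matching_def by blast
  with match card_E have card_U: "card (\<Union>M) = 2 * card M" by (rule card_Union_matching)
  have "finite (\<Union>M)"
    using \<open>finite M\<close> match card_E by (intro finite_Union) (auto simp: matching_def card_ge_0_finite)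
  define A where "A = {a1, a2, a3} \<inter> \<Union>M"
  define B where "B = {b1, b2, b3} \<inter> \<Union>M"
  have "2 \<le> card A" unfolding A_def
    using cover assms(4-6) dist by (intro triangle_vertex_cover[where E = E]) simp_all
  moreover have "2 \<le> card B" unfolding B_def
    using cover assms(7-9) dist by (intro triangle_vertex_cover[where E = E]) simp_all
  moreover have "A \<inter> B = {}" unfolding A_def B_def using dist by auto
  ultimately have card_AB: "4 \<le> card (A \<union> B)" by (simp add: card_Un_disjoint A_def B_def)
  have AB: "A \<union> B \<subseteq> \<Union>M" unfolding A_def B_def by blast
  with card_AB have "4 \<le> card (\<Union>M)" using card_mono[OF \<open>finite (\<Union>M)\<close>] by (meson le_trans)
  then show "2 \<le> card M" using card_U by simp
  assume "card M = 2"
  with card_AB card_U card_mono[OF \<open>finite (\<Union>M)\<close> AB] have "A \<union> B = \<Union>M"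
    by (intro card_subset_eq[OF \<open>finite (\<Union>M)\<close> AB]) simp
  then show "\<Union>M \<subseteq> {a1, a2, a3, b1, b2, b3}" unfolding A_def B_def by blast
qed

lemma connected_graph_edges_eq_core_pendants:
  assumes con: "connected_graph V E" and "finite V" "finite E"
    and "C \<subseteq> V" "C \<noteq> {}" "Ce \<subseteq> E" "\<forall>e\<in>Ce. e \<subseteq> C"
    and "U \<subseteq> C" and cover: "\<forall>e\<in>E. e \<inter> U \<noteq> {}"
    and card_E: "card E \<le> card Ce + card (V - C)"
  obtains nb where "\<forall>x\<in>V - C. nb x \<in> U" and "E = Ce \<union> (\<lambda>x. {x, nb x}) ` (V - C)"
proof -
  have "\<exists>y\<in>U. {x, y} \<in> E" if x: "x \<in> V - C" for x
  proof -
    obtain z where "z \<in> C" using \<open>C \<noteq> {}\<close> by blast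
    with x \<open>C \<subseteq> V\<close> con have "(x, z) \<in> (adj_rel E)\<^sup>*" "x \<noteq> z"
      unfolding connected_graph_def by auto
    then obtain y where "(x, y) \<in> adj_rel E" by (blast elim: converse_rtranclE)
    then have "{x, y} \<in> E" by (simp add: adj_rel_def)
    with cover have "{x, y} \<inter> U \<noteq> {}" by blast
    moreover have "x \<notin> U" using x \<open>U \<subseteq> C\<close> by blast
    ultimately have "y \<in> U" by auto
    with \<open>{x, y} \<in> E\<close> show ?thesis by blast
  qed
  then obtain nb where nb: "\<forall>x\<in>V - C. nb x \<in> U \<and> {x, nb x} \<in> E" by metis
  let ?P = "(\<lambda>x. {x, nb x}) ` (V - C)"
  have "inj_on (\<lambda>x. {x, nb x}) (V - C)"
    using nb \<open>U \<subseteq> C\<close> by (intro inj_onI) (metis DiffD2 doubleton_eq_iff subsetD)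
  then have "card ?P = card (V - C)" by (rule card_image)
  moreover have "Ce \<inter> ?P = {}" using \<open>\<forall>e\<in>Ce. e \<subseteq> C\<close> by blast
  moreover have "finite Ce" using \<open>Ce \<subseteq> E\<close> \<open>finite E\<close> by (rule finite_subset)
  ultimately have "card (Ce \<union> ?P) = card Ce + card (V - C)"
    using \<open>finite V\<close> by (simp add: card_Un_disjoint)
  with card_E have "card E \<le> card (Ce \<union> ?P)" by simp
  moreover have "Ce \<union> ?P \<subseteq> E" using \<open>Ce \<subseteq> E\<close> nb by blast
  ultimately have "Ce \<union> ?P = E" using \<open>finite E\<close> card_seteq by blast
  with nb that show thesis by blast
qed

lemma pairwise_disjnt_three_edges:
  "distinct [x1, x2, x3, x4, x5, x6] \<Longrightarrow> pairwise disjnt {{x1, x2}, {x3, x4}, {x5, x6}}"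
  by (auto simp: pairwise_insert disjnt_def)

lemma card_three_edges:
  "distinct [x1, x2, x3, x4, x5, x6] \<Longrightarrow> card {{x1, x2}, {x3, x4}, {x5, x6}} = 3"
  by (auto simp: card_insert_if doubleton_eq_iff)

lemma card_core_edges:
  assumes "distinct [a, b, c, u, d, f, g]"
  shows "card {{a, b}, {b, c}, {a, c}, {c, u}, {u, d}, {d, f}, {f, g}, {d, g}} = 8"
  using assms by (auto simp: card_insert_if doubleton_eq_iff)

section \<open>The graph T1_33\<close>

definition avm_T1_33_formula :: "nat \<Rightarrow> real" where
  "avm_T1_33_formula n = (9 * real n - 39) / (3 * real n - 11)"

lemma avm_T1_33_formula_bounds:
  assumes "7 \<le> n"
  shows "2 < avm_T1_33_formula n" "avm_T1_33_formula n < 3"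
  using assms by (simp_all add: avm_T1_33_formula_def field_simps)

definition far_triangle :: "nat set set" where
  "far_triangle = {{3, 4}, {4, 5}, {3, 5}}"

lemma far_triangle_disjoint: "t \<in> far_triangle \<Longrightarrow> t \<inter> {0, 1, 2} = {}"
  by (auto simp: far_triangle_def)

lemma card_far_triangle: "card far_triangle = 3"
  by (simp add: far_triangle_def doubleton_eq_iff)

lemma T1_33_edge_iff:
  "e \<in> T1_33_edges n \<longleftrightarrow> e \<in> {{0, 1}, {1, 2}, {0, 2}} \<or> e \<in> far_triangle \<or> e = {2, 3}
    \<or> (\<exists>k. e = {2, k} \<and> 6 \<le> k \<and> k < n)"
  unfolding T1_33_edges_def far_triangle_def Un_iff insert_iff mem_Collect_eq empty_iff
  by (simp only: disj_assoc simp_thms)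

lemma T1_33_edges_nonempty: "\<forall>e\<in>T1_33_edges n. e \<noteq> {}"
proof
  fix e assume "e \<in> T1_33_edges n"
  then show "e \<noteq> {}"
    unfolding T1_33_edge_iff far_triangle_def by (elim disjE exE conjE insertE emptyE) simp_all
qed

definition T1_33_small :: "nat set set set" where
  "T1_33_small = (\<lambda>(h, t). {h, t}) ` ({{0, 2}, {1, 2}} \<times> far_triangle)"

definition T1_33_large :: "nat \<Rightarrow> nat set set set" where
  "T1_33_large n = insert {{2, 3}, {0, 1}, {4, 5}}
     ((\<lambda>(k, t). {{2, k}, {0, 1}, t}) ` ({6..<n} \<times> far_triangle))"

lemma T1_33_maximal_matchingI:
  assumes "M \<subseteq> T1_33_edges n" "pairwise disjnt M"
    and "\<And>e. e \<in> T1_33_edges n \<Longrightarrow> e \<inter> \<Union>M \<noteq> {}"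
  shows "maximal_matching (T1_33_edges n) M"
  using assms
  by (simp add: maximal_matching_iff_covers[OF T1_33_edges_nonempty] matching_iff_pairwise_disjnt)

lemma T1_33_small_maximal:
  assumes "M \<in> T1_33_small"
  shows "maximal_matching (T1_33_edges n) M"
proof -
  from assms obtain h t where M: "M = {h, t}" and h: "h = {0, 2} \<or> h = {1, 2}"
    and t: "t \<in> far_triangle"
    by (auto simp: T1_33_small_def)
  show ?thesis
  proof (rule T1_33_maximal_matchingI)
    show "M \<subseteq> T1_33_edges n" using h t by (auto simp: T1_33_edge_iff M)
    show "pairwise disjnt M" using h t by (auto simp: M far_triangle_def pairwise_insert disjnt_def)
    show "e \<inter> \<Union>M \<noteq> {}" if "e \<in> T1_33_edges n" for e
      using that h t unfolding T1_33_edge_iff far_triangle_def M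
      by (elim disjE exE conjE insertE emptyE) simp_all
  qed
qed

lemma T1_33_large_maximal:
  assumes "M \<in> T1_33_large n"
  shows "maximal_matching (T1_33_edges n) M"
proof -
  from assms consider "M = {{2, 3}, {0, 1}, {4, 5}}"
    | k t where "M = {{2, k}, {0, 1}, t}" "6 \<le> k" "k < n" "t \<in> far_triangle"
    by (auto simp: T1_33_large_def)
  then show ?thesis
  proof cases
    case 1
    show ?thesis
    proof (rule T1_33_maximal_matchingI)
      show "M \<subseteq> T1_33_edges n" by (simp add: 1 T1_33_edge_iff far_triangle_def)
      show "pairwise disjnt M" by (auto simp: 1 pairwise_insert disjnt_def)
      show "e \<inter> \<Union>M \<noteq> {}" if "e \<in> T1_33_edges n" for e
        using that unfolding T1_33_edge_iff far_triangle_def 1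
        by (elim disjE exE conjE insertE emptyE) simp_all
    qed
  next
    case 2
    show ?thesis
    proof (rule T1_33_maximal_matchingI)
      show "M \<subseteq> T1_33_edges n" using 2 by (auto simp: T1_33_edge_iff)
      show "pairwise disjnt M"
        using 2 by (auto simp: far_triangle_def pairwise_insert disjnt_def)
      show "e \<inter> \<Union>M \<noteq> {}" if "e \<in> T1_33_edges n" for e
        using that 2 unfolding T1_33_edge_iff far_triangle_def
        by (elim disjE exE conjE insertE emptyE) simp_all
    qed
  qed
qed

lemma T1_33_hub_edge:
  assumes max: "maximal_matching (T1_33_edges n) M" and "6 < n"
  obtains e where "e \<in> M"
    and "e = {1, 2} \<or> e = {0, 2} \<or> e = {2, 3} \<or> (\<exists>k. e = {2, k} \<and> 6 \<le> k \<and> k < n)"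
proof -
  let ?E = "T1_33_edges n"
  have match: "matching ?E M" and covers: "\<forall>e\<in>?E. e \<inter> \<Union>M \<noteq> {}"
    using max by (simp_all add: maximal_matching_iff_covers[OF T1_33_edges_nonempty])
  (* the leaf 6 can only be covered through the hub 2 *)
  have "{2, 6} \<in> ?E" using \<open>6 < n\<close> unfolding T1_33_edge_iff by blast
  with covers have "{2, 6} \<inter> \<Union>M \<noteq> {}" by (rule bspec)
  then obtain e where "e \<in> M" "e \<inter> {2, 6} \<noteq> {}" by blast
  moreover from this have "e \<in> ?E" using match unfolding matching_def by blast
  ultimately show thesis unfolding T1_33_edge_iff far_triangle_def
    by (elim disjE exE conjE insertE emptyE) (auto intro: that)
qed

lemma T1_33_matching_around_hub_edge:
  assumes max: "maximal_matching (T1_33_edges n) M" and "e \<in> M" "2 \<in> e"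
  obtains t where "t \<in> far_triangle" "t \<inter> e = {}" "M = insert e (insert t (M \<inter> {{0, 1}}))"
    and "{0, 1} \<in> M \<longleftrightarrow> e \<inter> {0, 1} = {}"
proof -
  let ?E = "T1_33_edges n"
  have match: "matching ?E M" and covers: "\<forall>e\<in>?E. e \<inter> \<Union>M \<noteq> {}"
    using max by (simp_all add: maximal_matching_iff_covers[OF T1_33_edges_nonempty])
  have disj: "g \<inter> h = {}" if "g \<in> M" "h \<in> M" "g \<noteq> h" for g h
    using match that unfolding matching_def by blast
  have edge: "g \<in> ?E" if "g \<in> M" for g using match that unfolding matching_def by blast
  have other: "g = {0, 1} \<or> g \<in> far_triangle" if "g \<in> M" "g \<noteq> e" for g
    using edge[OF that(1)] disj[OF that(1) \<open>e \<in> M\<close> that(2)] \<open>2 \<in> e\<close> unfolding T1_33_edge_iff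
    by (elim disjE exE conjE) auto
  have "{4, 5} \<in> ?E" by (simp add: T1_33_edge_iff far_triangle_def)
  with covers have "{4, 5} \<inter> \<Union>M \<noteq> {}" by (rule bspec)
  then obtain t where "t \<in> M" "t \<inter> {4, 5} \<noteq> {}" by blast
  moreover have "t \<noteq> e" using edge[OF \<open>e \<in> M\<close>] \<open>2 \<in> e\<close> \<open>t \<inter> {4, 5} \<noteq> {}\<close>
    unfolding T1_33_edge_iff far_triangle_def by (elim disjE exE conjE insertE emptyE) auto
  ultimately have "t = {0, 1} \<or> t \<in> far_triangle" by (intro other)
  with \<open>t \<inter> {4, 5} \<noteq> {}\<close> have t: "t \<in> far_triangle" by auto
  have "g = t" if "g \<in> M" "g \<in> far_triangle" for g
    using disj[OF that(1) \<open>t \<in> M\<close>] that(2) t unfolding far_triangle_def by blast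
  then have "M = insert e (insert t (M \<inter> {{0, 1}}))" using other \<open>t \<in> M\<close> \<open>e \<in> M\<close> by blast
  moreover have "{0, 1} \<in> M \<longleftrightarrow> e \<inter> {0, 1} = {}"
  proof
    assume "e \<inter> {0, 1} = {}"
    have "{0, 1} \<in> ?E" by (simp add: T1_33_edge_iff)
    with covers obtain g where "g \<in> M" "g \<inter> {0, 1} \<noteq> {}" by blast
    moreover from \<open>g \<inter> {0, 1} \<noteq> {}\<close> \<open>e \<inter> {0, 1} = {}\<close> have "g \<noteq> e" by blast
    moreover from \<open>g \<inter> {0, 1} \<noteq> {}\<close> have "g \<notin> far_triangle"
      by (auto simp: far_triangle_def)
    ultimately show "{0, 1} \<in> M" using other by metis
  next
    assume "{0, 1} \<in> M"
    moreover have "e \<noteq> {0, 1}" using \<open>2 \<in> e\<close> by auto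
    ultimately show "e \<inter> {0, 1} = {}" using disj \<open>e \<in> M\<close> by blast
  qed
  moreover have "t \<inter> e = {}" using disj[OF \<open>t \<in> M\<close> \<open>e \<in> M\<close> \<open>t \<noteq> e\<close>] .
  ultimately show thesis using t that by blast
qed

lemma maximal_matching_T1_33_cases:
  assumes max: "maximal_matching (T1_33_edges n) M" and "6 < n"
  shows "M \<in> T1_33_small \<union> T1_33_large n"
proof -
  obtain e where "e \<in> M"
    and e: "e = {1, 2} \<or> e = {0, 2} \<or> e = {2, 3} \<or> (\<exists>k. e = {2, k} \<and> 6 \<le> k \<and> k < n)"
    using T1_33_hub_edge[OF assms] .
  then have "2 \<in> e" by auto
  with max \<open>e \<in> M\<close> obtain t where t: "t \<in> far_triangle" "t \<inter> e = {}"
    and M: "M = insert e (insert t (M \<inter> {{0, 1}}))" and zero_one: "{0, 1} \<in> M \<longleftrightarrow> e \<inter> {0, 1} = {}"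
    by (rule T1_33_matching_around_hub_edge)
  from e show ?thesis
  proof (elim disjE exE conjE)
    assume "e = {1, 2}"
    then show ?thesis using M zero_one t(1) by (auto simp: T1_33_small_def)
  next
    assume "e = {0, 2}"
    then show ?thesis using M zero_one t(1) by (auto simp: T1_33_small_def)
  next
    assume "e = {2, 3}"
    then have "t = {4, 5}" using t unfolding far_triangle_def by auto
    then show ?thesis using M zero_one \<open>e = {2, 3}\<close> by (auto simp: T1_33_large_def)
  next
    fix k assume k: "e = {2, k}" "6 \<le> k" "k < n"
    then have "M = (\<lambda>(k, t). {{2, k}, {0, 1}, t}) (k, t)"
      using M zero_one by (auto simp: insert_commute)
    moreover have "(k, t) \<in> {6..<n} \<times> far_triangle" using k t(1) by simp
    ultimately show ?thesis unfolding T1_33_large_def by blast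
  qed
qed

lemma maximal_matchings_T1_33:
  "6 < n \<Longrightarrow> maximal_matchings (T1_33_edges n) = T1_33_small \<union> T1_33_large n"
  using maximal_matching_T1_33_cases T1_33_small_maximal T1_33_large_maximal
  unfolding maximal_matchings_def by blast

lemma card_T1_33_small_elem: "M \<in> T1_33_small \<Longrightarrow> card M = 2"
  by (auto simp: T1_33_small_def far_triangle_def doubleton_eq_iff)

lemma card_T1_33_large_elem: "M \<in> T1_33_large n \<Longrightarrow> card M = 3"
  by (auto simp: T1_33_large_def far_triangle_def intro!: card_three_edges)

lemma card_T1_33_small: "card T1_33_small = 6"
proof -
  have "inj_on (\<lambda>(h, t). {h, t}) ({{0, 2}, {1, 2}} \<times> far_triangle)"
  proof (rule inj_onI, clarsimp)
    fix h t h' t'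
    assume h: "h = {0, 2} \<or> h = {Suc 0, 2}" "h' = {0, 2} \<or> h' = {Suc 0, 2}"
      and t: "t \<in> far_triangle" "t' \<in> far_triangle" and eq: "{h, t} = {h', t'}"
    have "2 \<in> h" "2 \<in> h'" "2 \<notin> t" "2 \<notin> t'" using h far_triangle_disjoint[OF t(1)]
      far_triangle_disjoint[OF t(2)] by blast+
    have "h \<in> {h', t'}" "t \<in> {h', t'}" using eq by (metis insertI1 insertI2)+
    moreover have "h \<noteq> t'" "t \<noteq> h'"
      using \<open>2 \<in> h\<close> \<open>2 \<notin> t'\<close> \<open>2 \<in> h'\<close> \<open>2 \<notin> t\<close> by metis+
    ultimately show "h = h' \<and> t = t'" by (simp only: insert_iff empty_iff simp_thms)
  qed
  then show ?thesis
    by (simp add: T1_33_small_def card_image card_cartesian_product card_far_triangle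
        doubleton_eq_iff)
qed

lemma card_T1_33_large: "card (T1_33_large n) = 3 * (n - 6) + 1"
proof -
  let ?f = "\<lambda>(k, t). {{2, k}, {0, 1}, t} :: nat set set"
  let ?A = "{6..<n} \<times> far_triangle"
  have "(2::nat) \<notin> {0, 1}" "(3::nat) \<notin> {0, 1}" by simp_all
  have inj: "inj_on ?f ?A"
  proof (rule inj_onI, clarsimp)
    fix k t k' t'
    assume k: "6 \<le> k" "6 \<le> k'" and "t \<in> far_triangle" "t' \<in> far_triangle"
      and eq: "{{2, k}, {0, Suc 0}, t} = {{2, k'}, {0, Suc 0}, t'}"
    then have "2 \<notin> t" "2 \<notin> t'" "0 \<notin> t" using far_triangle_disjoint by blast+
    have "{2, k} \<in> {{2, k'}, {0, 1}, t'}" "t \<in> {{2, k'}, {0, 1}, t'}"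
      using eq by (metis One_nat_def insertI1 insertI2)+
    moreover have "{2, k} \<noteq> t'" "{2, k} \<noteq> {0, 1}" "t \<noteq> {2, k'}" "t \<noteq> {0, 1}"
      using \<open>2 \<notin> t'\<close> \<open>(2::nat) \<notin> {0, 1}\<close> \<open>2 \<notin> t\<close> \<open>0 \<notin> t\<close> by (metis insertI1)+
    ultimately have "{2, k} = {2, k'}" "t = t'" by (simp_all only: insert_iff empty_iff simp_thms)
    with k show "k = k' \<and> t = t'" by (auto simp: doubleton_eq_iff)
  qed
  have notin: "{{2, 3}, {0, 1}, {4, 5}} \<notin> ?f ` ?A"
  proof
    assume "{{2, 3}, {0, 1}, {4, 5}} \<in> ?f ` ?A"
    then obtain k t where "6 \<le> k" "t \<in> far_triangle"
      and "{{2, 3}, {0, 1}, {4, 5}} = {{2, k}, {0, 1}, t}"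
      by auto
    then have "{2, 3} \<in> {{2, k}, {0, 1}, t}" "2 \<notin> t" "3 \<notin> {2, k}"
      using far_triangle_disjoint by (metis insertI1, blast, simp)
    moreover have "{2, 3} \<noteq> {2, k}" "{2, 3::nat} \<noteq> {0, 1}" "{2, 3} \<noteq> t"
      using \<open>3 \<notin> {2, k}\<close> \<open>(3::nat) \<notin> {0, 1}\<close> \<open>2 \<notin> t\<close> by (metis insertI1 insertI2)+
    ultimately show False by (simp only: insert_iff empty_iff simp_thms)
  qed
  have "card (T1_33_large n) = card (?f ` ?A) + 1"
    unfolding T1_33_large_def Suc_eq_plus1[symmetric]
    by (rule card_insert_disjoint) (use notin in \<open>simp_all add: far_triangle_def\<close>)
  also have "card (?f ` ?A) = 3 * (n - 6)"
    using card_image[OF inj] by (simp add: card_cartesian_product card_far_triangle)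
  finally show ?thesis .
qed

lemma avm_T1_33:
  assumes "6 < n"
  shows "avm (T1_33_edges n) = avm_T1_33_formula n"
proof -
  let ?S = "T1_33_small" and ?L = "T1_33_large n"
  have fin: "finite ?S" "finite ?L"
    using card_T1_33_small card_T1_33_large by (simp_all add: card_ge_0_finite)
  have disj: "?S \<inter> ?L = {}" using card_T1_33_small_elem card_T1_33_large_elem by fastforce
  have "real (card (?S \<union> ?L)) = 3 * real n - 11"
    using card_Un_disjoint[OF fin disj] card_T1_33_small card_T1_33_large assms
    by (simp add: of_nat_diff)
  moreover have "(\<Sum>M\<in>?S \<union> ?L. real (card M)) = 9 * real n - 39"
  proof -
    have "(\<Sum>M\<in>?S \<union> ?L. real (card M)) = (\<Sum>M\<in>?S. real (card M)) + (\<Sum>M\<in>?L. real (card M))"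
      by (rule sum.union_disjoint[OF fin disj])
    also have "\<dots> = (\<Sum>M\<in>?S. 2) + (\<Sum>M\<in>?L. 3)"
      using card_T1_33_small_elem card_T1_33_large_elem by simp
    also have "\<dots> = 9 * real n - 39"
      using card_T1_33_small card_T1_33_large assms by (simp add: of_nat_diff)
    finally show ?thesis .
  qed
  ultimately show ?thesis
    using maximal_matchings_T1_33[OF assms] by (simp add: avm_def avm_T1_33_formula_def)
qed

section \<open>Two triangles joined by a path of length two\<close>

(* The total excess of four maximal matchings with two edges, two or three with three edges and
   n - 7 with four edges. *)
lemma avm_T1_33_formula_excess_pos:
  assumes "7 \<le> n"
  shows "0 < 4 * (2 - avm_T1_33_formula n) + (if n = 7 then 3 else 2) * (3 - avm_T1_33_formula n)
    + (real n - 7) * (4 - avm_T1_33_formula n)"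
proof (cases "n = 7")
  case True
  then show ?thesis by (simp add: avm_T1_33_formula_def)
next
  case False
  with assms have n: "8 \<le> real n" by simp
  define t where "t = avm_T1_33_formula n"
  define D where "D = 3 * real n - 11"
  have "0 < D" using n by (simp add: D_def)
  have tD: "t * D = 9 * real n - 39" using \<open>0 < D\<close> by (simp add: t_def D_def avm_T1_33_formula_def)
  have "(4 * (2 - t) + 2 * (3 - t) + (real n - 7) * (4 - t)) * D
      = 4 * (2 * D - t * D) + 2 * (3 * D - t * D) + (real n - 7) * (4 * D - t * D)"
    by (simp add: algebra_simps)
  also have "\<dots> = (real n - 8) * (3 * real n - 14) + 3"
    unfolding tD by (simp add: D_def algebra_simps)
  also have "\<dots> > 0" using n by (simp add: add_nonneg_pos)
  finally show ?thesis using \<open>0 < D\<close> False by (simp add: t_def zero_less_mult_iff)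
qed

(* G in the case of a maximal matching with two edges, with a b c = v1 v2 v3 and d f g = w1 w2 w3
   up to swapping v1, v2 and w2, w3: every vertex x outside the core is a leaf at nb x. *)
locale core_with_pendants =
  fixes V :: "'a set" and E :: "'a set set" and nb :: "'a \<Rightarrow> 'a"
    and a b c u d f g :: 'a
  assumes finite_V: "finite V"
    and distinct_core: "distinct [a, b, c, u, d, f, g]"
    and core_subset: "{a, b, c, u, d, f, g} \<subseteq> V"
    and nb_cover: "\<forall>x\<in>V - {a, b, c, u, d, f, g}. nb x \<in> {a, c, d, f}"
    and edges_eq: "E = {{a, b}, {b, c}, {a, c}, {c, u}, {u, d}, {d, f}, {f, g}, {d, g}}
      \<union> (\<lambda>x. {x, nb x}) ` (V - {a, b, c, u, d, f, g})"
begin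

abbreviation "core \<equiv> {a, b, c, u, d, f, g}"
abbreviation "cover \<equiv> {a, c, d, f}"
abbreviation "MM \<equiv> maximal_matchings E"

lemma core_edges: "{{a, b}, {b, c}, {a, c}, {c, u}, {u, d}, {d, f}, {f, g}, {d, g}} \<subseteq> E"
  by (simp add: edges_eq)

lemma pendant_edge: "x \<in> V - core \<Longrightarrow> {x, nb x} \<in> E"
  by (simp add: edges_eq)

lemma finite_E: "finite E"
  using finite_V by (simp add: edges_eq)

lemma edge_cases:
  assumes "e \<in> E"
  obtains "e \<in> {{a, b}, {b, c}, {a, c}, {c, u}, {u, d}, {d, f}, {f, g}, {d, g}}"
    | x where "x \<in> V - core" "e = {x, nb x}"
proof -
  from assms have "e \<in> {{a, b}, {b, c}, {a, c}, {c, u}, {u, d}, {d, f}, {f, g}, {d, g}}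
      \<or> e \<in> (\<lambda>x. {x, nb x}) ` (V - core)"
    by (simp only: edges_eq Un_iff)
  then show thesis
  proof
    assume "e \<in> (\<lambda>x. {x, nb x}) ` (V - core)"
    then obtain x where "e = {x, nb x}" "x \<in> V - core" by (rule imageE)
    then show thesis by (intro that(2))
  qed (rule that(1))
qed

lemma card_edge:
  assumes "e \<in> E"
  shows "card e = 2"
  using assms
proof (cases rule: edge_cases)
  case 1
  then show ?thesis using distinct_core by (elim insertE emptyE) simp_all
next
  case (2 x)
  then have "x \<noteq> nb x" using nb_cover by auto
  with 2 show ?thesis by simp
qed

lemma edge_meets_cover:
  assumes "e \<in> E"
  shows "e \<inter> cover \<noteq> {}"
  using assms
proof (cases rule: edge_cases)
  case 1
  then show ?thesis by (elim insertE emptyE) simp_all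
next
  case (2 x)
  then show ?thesis using nb_cover by auto
qed

lemma maximal_matchingI:
  assumes "M \<subseteq> E" "pairwise disjnt M" "cover \<subseteq> \<Union>M"
  shows "M \<in> MM"
proof -
  have "\<forall>e\<in>E. e \<noteq> {}" using card_edge by fastforce
  moreover have "\<forall>e\<in>E. e \<inter> \<Union>M \<noteq> {}" using edge_meets_cover assms(3) by blast
  ultimately show ?thesis using assms(1,2)
    by (simp add: maximal_matchings_def maximal_matching_iff_covers matching_iff_pairwise_disjnt)
qed

lemma card_core: "card core = 7"
  using distinct_core by simp

lemma three_matchings:
  "{{a, b}, {c, u}, {d, f}} \<in> MM" "{{a, c}, {u, d}, {f, g}} \<in> MM"
  using core_edges distinct_core
  by (auto intro!: maximal_matchingI pairwise_disjnt_three_edges)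

lemma three_matching_if_no_pendants:
  assumes "V = core"
  shows "{{b, c}, {u, d}, {f, g}} \<in> MM"
proof -
  let ?M = "{{b, c}, {u, d}, {f, g}}"
  have "\<forall>e\<in>E. e \<noteq> {}" using card_edge by fastforce
  moreover have "e \<inter> \<Union>?M \<noteq> {}" if "e \<in> E" for e
    using that assms distinct_core by (cases rule: edge_cases) auto
  moreover have "matching E ?M"
    using core_edges distinct_core
    by (auto simp: matching_iff_pairwise_disjnt intro!: pairwise_disjnt_three_edges)
  ultimately show ?thesis
    by (simp add: maximal_matchings_def maximal_matching_iff_covers)
qed

lemma perfect_matching_core_minus:
  assumes "y \<in> cover"
  shows "\<exists>R. matching E R \<and> \<Union>R = core - {y}"
proof -
  have match: "matching E {{x1, x2}, {x3, x4}, {x5, x6}}"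
    if "{{x1, x2}, {x3, x4}, {x5, x6}} \<subseteq> E" "distinct [x1, x2, x3, x4, x5, x6]"
    for x1 x2 x3 x4 x5 x6
    using that by (simp add: matching_iff_pairwise_disjnt pairwise_disjnt_three_edges)
  from assms consider "y = a" | "y = c" | "y = d" | "y = f" by blast
  then show ?thesis
  proof cases
    case 1
    show ?thesis using 1 core_edges distinct_core
      by (intro exI[of _ "{{b, c}, {u, d}, {f, g}}"] conjI match) auto
  next
    case 2
    show ?thesis using 2 core_edges distinct_core
      by (intro exI[of _ "{{a, b}, {u, d}, {f, g}}"] conjI match) auto
  next
    case 3
    show ?thesis using 3 core_edges distinct_core
      by (intro exI[of _ "{{a, b}, {c, u}, {f, g}}"] conjI match) auto
  next
    case 4
    show ?thesis using 4 core_edges distinct_core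
      by (intro exI[of _ "{{a, b}, {c, u}, {d, g}}"] conjI match) auto
  qed
qed

definition pendant_matching :: "'a \<Rightarrow> 'a set set" where
  "pendant_matching x = insert {x, nb x} (SOME R. matching E R \<and> \<Union>R = core - {nb x})"

lemma pendant_matching:
  assumes x: "x \<in> V - core"
  shows "pendant_matching x \<in> MM" "card (pendant_matching x) = 4"
    and "\<Union>(pendant_matching x) = insert x core"
proof -
  define R where "R = (SOME R. matching E R \<and> \<Union>R = core - {nb x})"
  have nb: "nb x \<in> cover" using nb_cover x by blast
  then have R: "matching E R" "\<Union>R = core - {nb x}"
    unfolding R_def using someI_ex[OF perfect_matching_core_minus] by blast+
  have M: "pendant_matching x = insert {x, nb x} R" by (simp add: pendant_matching_def R_def)
  have "\<forall>e\<in>R. e \<inter> {x, nb x} = {}" using R(2) x by blast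
  with R(1) pendant_edge[OF x] have match: "matching E (pendant_matching x)"
    unfolding M matching_def by blast
  show union: "\<Union>(pendant_matching x) = insert x core"
    using R(2) nb unfolding M by blast
  with match show "pendant_matching x \<in> MM"
    by (intro maximal_matchingI) (auto simp: matching_iff_pairwise_disjnt)
  have "finite (pendant_matching x)"
    using match finite_E finite_subset unfolding matching_def by blast
  with match card_edge have "card (\<Union>(pendant_matching x)) = 2 * card (pendant_matching x)"
    by (intro card_Union_matching) auto
  then show "card (pendant_matching x) = 4" using x card_core union by simp
qed

lemma card_pendant_matchings: "card (pendant_matching ` (V - core)) = card V - 7"
proof -
  have "inj_on pendant_matching (V - core)"
  proof (rule inj_onI)
    fix x y assume "x \<in> V - core" "y \<in> V - core" "pendant_matching x = pendant_matching y"
    then have "insert x core = insert y core" using pendant_matching(3) by metis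
    with \<open>x \<in> V - core\<close> \<open>y \<in> V - core\<close> show "x = y" by blast
  qed
  then have "card (pendant_matching ` (V - core)) = card (V - core)" by (rule card_image)
  also have "\<dots> = card V - 7" using finite_V core_subset card_core by (simp add: card_Diff_subset)
  finally show ?thesis .
qed

lemma two_le_card_maximal_matching: "M \<in> MM \<Longrightarrow> 2 \<le> card M"
  using core_edges distinct_core card_edge finite_E
  by (intro maximal_matching_two_triangles(1)[of E M a b c d f g])
     (simp_all add: maximal_matchings_def)

lemma two_matching_cases:
  assumes "M \<in> MM" "card M = 2"
  shows "M \<in> (\<lambda>(e1, e2). {e1, e2}) ` ({{a, c}, {b, c}} \<times> {{d, f}, {d, g}})"
proof -
  have max: "maximal_matching E M" using assms(1) by (simp add: maximal_matchings_def)
  have U: "\<Union>M \<subseteq> {a, b, c, d, f, g}"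
    using max assms(2) core_edges distinct_core card_edge finite_E
    by (intro maximal_matching_two_triangles(2)[of E M a b c d f g]) simp_all
  have "\<forall>e\<in>E. e \<noteq> {}" using card_edge by fastforce
  with max have match: "matching E M" and covers: "\<forall>e\<in>E. e \<inter> \<Union>M \<noteq> {}"
    by (simp_all add: maximal_matching_iff_covers)
  have triangle_edge: "e \<in> {{a, b}, {b, c}, {a, c}, {d, f}, {f, g}, {d, g}}" if "e \<in> M" for e
  proof -
    have "e \<in> E" "e \<subseteq> {a, b, c, d, f, g}" using that match U unfolding matching_def by blast+
    from \<open>e \<in> E\<close> show ?thesis
    proof (cases rule: edge_cases)
      case 1
      have "u \<notin> e" using \<open>e \<subseteq> {a, b, c, d, f, g}\<close> distinct_core by auto
      with 1 show ?thesis by (elim insertE emptyE) simp_all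
    next
      case (2 x)
      then show ?thesis using \<open>e \<subseteq> {a, b, c, d, f, g}\<close> by auto
    qed
  qed
  have "u \<notin> \<Union>M" using U distinct_core by auto
  moreover have "{c, u} \<inter> \<Union>M \<noteq> {}" "{u, d} \<inter> \<Union>M \<noteq> {}" using covers core_edges by auto
  ultimately obtain e1 e2 where e1: "e1 \<in> M" "c \<in> e1" and e2: "e2 \<in> M" "d \<in> e2" by blast
  have e1_cases: "e1 \<in> {{a, c}, {b, c}}"
    using triangle_edge[OF e1(1)] e1(2) distinct_core by (elim insertE emptyE) auto
  have e2_cases: "e2 \<in> {{d, f}, {d, g}}"
    using triangle_edge[OF e2(1)] e2(2) distinct_core by (elim insertE emptyE) auto
  have "e1 \<noteq> e2" using e1_cases e2(2) distinct_core by auto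
  have "finite M" using match finite_E finite_subset unfolding matching_def by blast
  moreover have "{e1, e2} \<subseteq> M" using e1 e2 by blast
  moreover have "card {e1, e2} = card M" using \<open>e1 \<noteq> e2\<close> assms(2) by simp
  ultimately have "{e1, e2} = M" by (rule card_subset_eq)
  with e1_cases e2_cases show ?thesis by blast
qed

lemma card_two_matchings: "card {M\<in>MM. card M = 2} \<le> 4"
proof -
  let ?pairs = "{{a, c}, {b, c}} \<times> {{d, f}, {d, g}}"
  have "{M\<in>MM. card M = 2} \<subseteq> (\<lambda>(e1, e2). {e1, e2}) ` ?pairs"
    using two_matching_cases by blast
  then have "card {M\<in>MM. card M = 2} \<le> card ((\<lambda>(e1, e2). {e1, e2}) ` ?pairs)"
    by (intro card_mono) simp_all
  also have "\<dots> \<le> card ?pairs" by (rule card_image_le) simp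
  also have "\<dots> \<le> 2 * 2"
    unfolding card_cartesian_product by (intro mult_le_mono) (simp_all add: card_insert_if)
  finally show ?thesis by simp
qed

lemma three_matchings_distinct:
  "{{a, b}, {c, u}, {d, f}} \<noteq> {{a, c}, {u, d}, {f, g}}"
  "{{a, b}, {c, u}, {d, f}} \<noteq> {{b, c}, {u, d}, {f, g}}"
  "{{a, c}, {u, d}, {f, g}} \<noteq> {{b, c}, {u, d}, {f, g}}"
proof -
  have "{c, u} \<notin> {{a, c}, {u, d}, {f, g}}" "{a, b} \<notin> {{b, c}, {u, d}, {f, g}}"
    "{a, c} \<notin> {{b, c}, {u, d}, {f, g}}"
    using distinct_core by (auto simp: doubleton_eq_iff)
  then show "{{a, b}, {c, u}, {d, f}} \<noteq> {{a, c}, {u, d}, {f, g}}"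
    "{{a, b}, {c, u}, {d, f}} \<noteq> {{b, c}, {u, d}, {f, g}}"
    "{{a, c}, {u, d}, {f, g}} \<noteq> {{b, c}, {u, d}, {f, g}}"
    by (metis insert_iff)+
qed

lemma excess_pos: "0 < (\<Sum>M\<in>MM. real (card M) - avm_T1_33_formula (card V))"
proof -
  define n where "n = card V"
  define t where "t = avm_T1_33_formula n"
  have n7: "7 \<le> n" using card_mono[OF finite_V core_subset] card_core by (simp add: n_def)
  have V_core: "V = core \<longleftrightarrow> n = 7"
    using card_seteq[OF finite_V core_subset] card_core by (auto simp: n_def)
  have t: "2 < t" "t < 3" unfolding t_def using avm_T1_33_formula_bounds[OF n7] by auto
  define T where "T = (if V = core then {{{b, c}, {u, d}, {f, g}}} else {})
    \<union> {{{a, b}, {c, u}, {d, f}}, {{a, c}, {u, d}, {f, g}}}"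
  define P where "P = pendant_matching ` (V - core)"
  have T: "T \<subseteq> MM" "\<forall>M\<in>T. card M = 3" "card T = (if n = 7 then 3 else 2)"
    using three_matchings three_matching_if_no_pendants V_core three_matchings_distinct
      distinct_core by (auto simp: T_def card_three_edges)
  have P: "P \<subseteq> MM" "\<forall>M\<in>P. card M = 4" "card P = n - 7"
    using pendant_matching card_pendant_matchings by (auto simp: P_def n_def)
  have "finite T" "finite P" by (simp_all add: T_def P_def finite_V)
  moreover have "T \<inter> P = {}" using T(2) P(2) by fastforce
  ultimately have "(\<Sum>M\<in>T \<union> P. real (card M) - t)
      = (\<Sum>M\<in>T. real (card M) - t) + (\<Sum>M\<in>P. real (card M) - t)"
    by (rule sum.union_disjoint)
  also have "\<dots> = (if n = 7 then 3 else 2) * (3 - t) + (real n - 7) * (4 - t)"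
    using T(2,3) P(2,3) n7 by (simp add: of_nat_diff)
  finally have "0 < 4 * (2 - t) + (\<Sum>M\<in>T \<union> P. real (card M) - t)"
    using avm_T1_33_formula_excess_pos[OF n7] by (simp add: t_def)
  also have "\<dots> \<le> (\<Sum>M\<in>MM. real (card M) - t)"
    using sum_excess_lower_bound[of MM t 4 "T \<union> P"] finite_maximal_matchings[OF finite_E] t
      two_le_card_maximal_matching card_two_matchings T(1,2) P(1,2)
    by fastforce
  finally show ?thesis by (simp add: t_def n_def)
qed

end

lemma two_matching_vertex_cover:
  assumes card_edge: "\<forall>e\<in>E. card e = 2" and "finite E"
    and dist: "distinct [v1, v2, v3, u, w1, w2, w3]"
    and edges: "{v1, v2} \<in> E" "{v2, v3} \<in> E" "{v1, v3} \<in> E" "{w1, w2} \<in> E" "{w2, w3} \<in> E"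
      "{w1, w3} \<in> E" "{v3, u} \<in> E" "{u, w1} \<in> E"
    and M: "M \<in> maximal_matchings E" "card M = 2"
  obtains a b f g where "(a = v1 \<and> b = v2) \<or> (a = v2 \<and> b = v1)"
    and "(f = w2 \<and> g = w3) \<or> (f = w3 \<and> g = w2)" and "\<forall>e\<in>E. e \<inter> {a, v3, w1, f} \<noteq> {}"
proof -
  have "\<forall>e\<in>E. e \<noteq> {}" using card_edge by (metis card.empty zero_neq_numeral)
  with M(1) have match: "matching E M" and covers: "\<forall>e\<in>E. e \<inter> \<Union>M \<noteq> {}"
    by (simp_all add: maximal_matchings_def maximal_matching_iff_covers)
  have U: "\<Union>M \<subseteq> {v1, v2, v3, w1, w2, w3}"
    using M dist card_edge \<open>finite E\<close> edges
    by (intro maximal_matching_two_triangles(2)[of E M]) (simp_all add: maximal_matchings_def)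
  have "finite M" using match \<open>finite E\<close> finite_subset unfolding matching_def by blast
  with match card_edge M(2) have card_U: "card (\<Union>M) = 4"
    using card_Union_matching by fastforce
  have "u \<notin> \<Union>M" using U dist by auto
  moreover have "{v3, u} \<inter> \<Union>M \<noteq> {}" "{u, w1} \<inter> \<Union>M \<noteq> {}" using covers edges(7,8) by blast+
  ultimately have "v3 \<in> \<Union>M" "w1 \<in> \<Union>M" by blast+
  have "{v1, v2} \<inter> \<Union>M \<noteq> {}" "{w2, w3} \<inter> \<Union>M \<noteq> {}" using covers edges(1,5) by blast+
  then obtain a b f g where ab: "(a = v1 \<and> b = v2) \<or> (a = v2 \<and> b = v1)" "a \<in> \<Union>M"
    and fg: "(f = w2 \<and> g = w3) \<or> (f = w3 \<and> g = w2)" "f \<in> \<Union>M"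
    by blast
  have "{a, v3, w1, f} \<subseteq> \<Union>M" using ab(2) fg(2) \<open>v3 \<in> \<Union>M\<close> \<open>w1 \<in> \<Union>M\<close> by blast
  moreover have "card {a, v3, w1, f} = card (\<Union>M)" using ab(1) fg(1) dist card_U by auto
  moreover have "finite (\<Union>M)" using card_U by (simp add: card_ge_0_finite)
  ultimately have "{a, v3, w1, f} = \<Union>M" using card_subset_eq by blast
  with covers have "\<forall>e\<in>E. e \<inter> {a, v3, w1, f} \<noteq> {}" by simp
  with ab(1) fg(1) show thesis by (rule that)
qed

lemma two_matching_core_with_pendants:
  assumes sg: "simple_graph V E" and con: "connected_graph V E" and card_E: "card E = card V + 1"
    and dist: "distinct [v1, v2, v3, u, w1, w2, w3]" and sub: "{v1, v2, v3, u, w1, w2, w3} \<subseteq> V"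
    and edges: "{v1, v2} \<in> E" "{v2, v3} \<in> E" "{v1, v3} \<in> E" "{w1, w2} \<in> E" "{w2, w3} \<in> E"
      "{w1, w3} \<in> E" "{v3, u} \<in> E" "{u, w1} \<in> E"
    and M: "M \<in> maximal_matchings E" "card M = 2"
  obtains nb a b f g where "core_with_pendants V E nb a b v3 u w1 f g"
proof -
  have "finite V" using sg by (simp add: simple_graph_def)
  have "finite E" using card_E by (simp add: card_ge_0_finite)
  have card_edge: "\<forall>e\<in>E. card e = 2" using sg simple_graph_card_edge by blast
  obtain a b f g where ab: "(a = v1 \<and> b = v2) \<or> (a = v2 \<and> b = v1)"
    and fg: "(f = w2 \<and> g = w3) \<or> (f = w3 \<and> g = w2)" and cover: "\<forall>e\<in>E. e \<inter> {a, v3, w1, f} \<noteq> {}"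
    by (rule two_matching_vertex_cover[OF card_edge \<open>finite E\<close> dist edges M])
  have dist': "distinct [a, b, v3, u, w1, f, g]" using ab fg dist by auto
  have core: "{a, b, v3, u, w1, f, g} = {v1, v2, v3, u, w1, w2, w3}" using ab fg by auto
  with sub have sub': "{a, b, v3, u, w1, f, g} \<subseteq> V" by simp
  let ?Ce = "{{a, b}, {b, v3}, {a, v3}, {v3, u}, {u, w1}, {w1, f}, {f, g}, {w1, g}}"
  have Ce: "?Ce \<subseteq> E" using ab fg edges by (auto simp: insert_commute)
  have card_le: "card E \<le> card ?Ce + card (V - {a, b, v3, u, w1, f, g})"
  proof -
    have "card {v1, v2, v3, u, w1, w2, w3} = 7" using dist by simp
    moreover from this have "7 \<le> card V" using card_mono[OF \<open>finite V\<close> sub] by simp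
    ultimately show ?thesis using card_core_edges[OF dist'] card_E sub \<open>finite V\<close>
      by (simp add: core card_Diff_subset)
  qed
  obtain nb where "\<forall>x\<in>V - {a, b, v3, u, w1, f, g}. nb x \<in> {a, v3, w1, f}"
    and "E = ?Ce \<union> (\<lambda>x. {x, nb x}) ` (V - {a, b, v3, u, w1, f, g})"
    by (rule connected_graph_edges_eq_core_pendants[OF con \<open>finite V\<close> \<open>finite E\<close> sub' _ Ce _ _
        cover card_le]) auto
  with \<open>finite V\<close> dist' sub' have "core_with_pendants V E nb a b v3 u w1 f g"
    by unfold_locales
  then show thesis by (rule that)
qed

theorem lemma4p5:
  fixes V :: "'a set" and E :: "'a set set" and n :: nat
    and v1 v2 v3 u w1 w2 w3 :: 'a
  assumes "n \<ge> 7"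
    and "simple_graph V E" and "connected_graph V E"
    and "card V = n" and "card E = n + 1"
    and "distinct [v1, v2, v3, u, w1, w2, w3]"
    and "{v1, v2, v3, u, w1, w2, w3} \<subseteq> V"
    and "{v1, v2} \<in> E" and "{v2, v3} \<in> E" and "{v1, v3} \<in> E"
    and "{w1, w2} \<in> E" and "{w2, w3} \<in> E" and "{w1, w3} \<in> E"
    and "{v3, u} \<in> E" and "{u, w1} \<in> E"
  shows "avm E > avm (T1_33_edges n)"
proof -
  let ?MM = "maximal_matchings E"
  have "finite E" using assms(5) by (simp add: card_ge_0_finite)
  then have "finite ?MM" by (rule finite_maximal_matchings)
  have "0 < (\<Sum>M\<in>?MM. real (card M) - avm_T1_33_formula n)"
  proof (cases "\<exists>M\<in>?MM. card M = 2")
    case True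
    then obtain M where M: "M \<in> ?MM" "card M = 2" by blast
    have "card E = card V + 1" using assms(4,5) by simp
    then obtain nb a b f g where "core_with_pendants V E nb a b v3 u w1 f g"
      using two_matching_core_with_pendants[OF assms(2,3) _ assms(6-15) M] by blast
    then show ?thesis using core_with_pendants.excess_pos assms(4) by fastforce
  next
    case False
    have "2 \<le> card M" if "M \<in> ?MM" for M
      using that assms(2,6,8-13) simple_graph_card_edge \<open>finite E\<close>
      by (intro maximal_matching_two_triangles(1)[of E M v1 v2 v3 w1 w2 w3])
         (auto simp: maximal_matchings_def)
    with False have "3 \<le> card M" if "M \<in> ?MM" for M using that by fastforce
    with \<open>finite ?MM\<close> show ?thesis
      using avm_T1_33_formula_bounds(2)[OF assms(1)] maximal_matchings_nonempty[OF \<open>finite E\<close>]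
      by (intro sum_pos) fastforce+
  qed
  with \<open>finite ?MM\<close> have "avm_T1_33_formula n < avm E" by (rule avm_gt_if_excess_pos)
  with avm_T1_33 assms(1) show ?thesis by simp
qed

end
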